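(* Assume condition (A1) on the sequence $(\beta_n)$. Then, for an arbitrary choice of the groups $G_1,\ldots,G_m$, the non-marginal multiple testing procedure is asymptotically consistent: $P$-almost surely, $\delta_{NM}(\mathbf d^t\mid\mathbf X_n)=1$ for all sufficiently large $n$. In particular $\lim_{n\to\infty}\delta_{NM}(\mathbf d^t\mid\mathbf X_n)=1$ a.s. and $\lim_{n\to\infty}E_{\mathbf X_n}[\delta_{NM}(\mathbf d^t\mid\mathbf X_n)]=1$.
   Context: Data and models: $\mathbf X_n=(X_1,\ldots,X_n)$ are the first $n$ coordinates of a process with true distribution $P$; $p(\mathbf X_n)$ is the true joint density and $f_{\boldsymbol\theta}(\mathbf X_n)$ the postulated density for $\boldsymbol\theta=(\theta_1,\ldots,\theta_M)\in\boldsymbol\Theta=\Theta_1\times\cdots\times\Theta_M$ ($M\le\infty$); $P$ need not belong to the postulated family. $\pi$ is a prior on $\boldsymbol\Theta$, $\pi(\cdot\mid\mathbf X_n)$ the posterior; $E_{\mathbf X_n},P_{\mathbf X_n}$ denote expectation/probability over the data under $P$. For finitely many indices $i=1,\ldots,m$ ($1<m\le M$) one tests $H_{0i}:\theta_i\in\Theta_{0i}$ vs $H_{1i}:\theta_i\in\Theta_{1i}$, where $\Theta_{0i}\cap\Theta_{1i}=\emptyset$, $\Theta_{0i}\cup\Theta_{1i}=\Theta_i$. A decision configuration is $\mathbf d=(d_1,\ldots,d_m)\in\mathbb D=\{0,1\}^m$ ($d_i=1$ means $H_{0i}$ is rejected); $\Theta_{d_jj}$ means $\Theta_{0j}$ if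 $d_j=0$ and $\Theta_{1j}$ if $d_j=1$. $\mathbf 0,\mathbf 1$ denote the all-zero and all-one configurations. KL quantities: $h(\boldsymbol\theta)=\lim_{n}n^{-1}E_P[\log(p(\mathbf X_n)/f_{\boldsymbol\theta}(\mathbf X_n))]$; for measurable $A$, $h(A)=\pi\text{-}\operatorname{ess\,inf}_{\boldsymbol\theta\in A}h(\boldsymbol\theta)$, $J(\boldsymbol\theta)=h(\boldsymbol\theta)-h(\boldsymbol\Theta)$, $J(A)=\pi\text{-}\operatorname{ess\,inf}_{\boldsymbol\theta\in A}J(\boldsymbol\theta)$. Let $\boldsymbol\Theta(\mathbf d)=\prod_{i=1}^m\Theta_{d_ii}\times\prod_{i>m}\Theta_i$; the true configuration $\mathbf d^t$ is the unique $\mathbf d$ with $J(\boldsymbol\Theta(\mathbf d))=J(\boldsymbol\Theta)$. Groups and sets: for each $i$ a set $G_i\subseteq\{1,\ldots,m\}$ with $i\in G_i$ is fixed. Let $\Psi_{i\mathbf d}=\{\boldsymbol\theta:\theta_i\in\Theta_{1i},\ \theta_j\in\Theta_{d_jj}\ \forall j\in G_i\setminus\{i\}\}$ and $\Upsilon_{ki}=\{\boldsymbol\theta:\theta_i\in\Theta_{ki}\}$, $k=0,1$. Write $J(\boldsymbol\Theta_{i\mathbf d})=J(\Psi_{i\mathbf d})$, $J(\boldsymbol\Theta^c_{i\mathbf d})=J(\boldsymbol\Theta\setminus\Psi_{i\mathbf d})$, $J(H_{ki})=J(\Upsilon_{ki})$. $\mathbb D_i=\{\mathbf d: d_j=d^t_j\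 \forall j\in G_i\}$. Posterior probabilities: $w_{in}(\mathbf d)=\pi(\Psi_{i\mathbf d}\mid\mathbf X_n)$, $v_{in}=\pi(\Upsilon_{1i}\mid\mathbf X_n)$. Standing assumption (posterior exponential concentration, i.e. the conclusion of Shalizi's (2009) theorem under his conditions (S1)–(S7), assumed throughout): for all $i,\mathbf d,k$ the sets $A=\Psi_{i\mathbf d}$, $\boldsymbol\Theta\setminus\Psi_{i\mathbf d}$, $\Upsilon_{ki}$ have $\pi(A)>0$ and satisfy $\lim_{n\to\infty}n^{-1}\log\pi(A\mid\mathbf X_n)=-J(A)$ $P$-a.s.; moreover $J(\boldsymbol\Theta_{i\mathbf d})>0$ for $\mathbf d\notin\mathbb D_i$, $J(\boldsymbol\Theta_{i\mathbf d^t})>0$ when $d^t_i=0$, $J(\boldsymbol\Theta^c_{i\mathbf d^t})>0$ when $d^t_i=1$, $J(H_{1i})>0$ when $d^t_i=0$, $J(H_{0i})>0$ when $d^t_i=1$. Procedures: given $\beta_n\in[0,1)$, the non-marginal procedure selects $\hat{\mathbf d}=\arg\max_{\mathbf d\in\mathbb D}\sum_{i=1}^m d_i(w_{in}(\mathbf d)-\beta_n)$ (ties broken by any fixed rule) and sets $\delta_{NM}(\mathbf d\mid\mathbf X_n)=1$ if $\mathbf d=\hat{\mathbf d}$ and $0$ otherwise. The additive-loss procedure is the special case $G_i=\{i\}$ for all $i$, i.e. $\hat d_i=I(v_{in}>\beta_n)$. A procedure $\mathcal M$ with decision indicator $\delta_{\mathcal M}$ is asymptotically consistent if $\lim_n\delta_{\mathcal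 M}(\mathbf d^t\mid\mathbf X_n)=1$ almost surely. Condition (A1): $\liminf_{n}\beta_n>0$ and $\limsup_{n}\beta_n<1$. *)

theory Defs
  imports "HOL-Probability.Probability"
begin

definition data :: "(nat \<Rightarrow> 'w \<Rightarrow> 'x) \<Rightarrow> nat \<Rightarrow> 'w \<Rightarrow> 'x list" where
  "data X n \<omega> = map (\<lambda>i. X i \<omega>) [1..<Suc n]"

definition post_prob :: "'t measure \<Rightarrow> ('t \<Rightarrow> 'y \<Rightarrow> real) \<Rightarrow> 'y \<Rightarrow> 't set \<Rightarrow> real" where
  "post_prob pr f y A = (LINT t:A|pr. f t y) / (LINT t|pr. f t y)"

definition post :: "(nat \<Rightarrow> 'w \<Rightarrow> 'x) \<Rightarrow> 't measure \<Rightarrow> ('t \<Rightarrow> 'x list \<Rightarrow> real)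
    \<Rightarrow> nat \<Rightarrow> 'w \<Rightarrow> 't set \<Rightarrow> real" where
  "post X pr f n \<omega> A = post_prob pr f (data X n \<omega>) A"

definition ess_inf_on :: "'t measure \<Rightarrow> 't set \<Rightarrow> ('t \<Rightarrow> real) \<Rightarrow> real" where
  "ess_inf_on pr A g = Sup {c. AE t in pr. t \<in> A \<longrightarrow> c \<le> g t}"

definition KL_rate :: "'w measure \<Rightarrow> (nat \<Rightarrow> 'w \<Rightarrow> 'x) \<Rightarrow> ('x list \<Rightarrow> real)
    \<Rightarrow> ('t \<Rightarrow> 'x list \<Rightarrow> real) \<Rightarrow> 't \<Rightarrow> real" where
  "KL_rate M X p f \<theta> =
     lim (\<lambda>n. (LINT \<omega>|M. ln (p (data X n \<omega>) / f \<theta> (data X n \<omega>))) / real n)"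

definition Jfun :: "'w measure \<Rightarrow> (nat \<Rightarrow> 'w \<Rightarrow> 'x) \<Rightarrow> ('x list \<Rightarrow> real)
    \<Rightarrow> ('t \<Rightarrow> 'x list \<Rightarrow> real) \<Rightarrow> 't measure \<Rightarrow> 't \<Rightarrow> real" where
  "Jfun M X p f pr \<theta> = KL_rate M X p f \<theta> - ess_inf_on pr (space pr) (KL_rate M X p f)"

definition Jset :: "'w measure \<Rightarrow> (nat \<Rightarrow> 'w \<Rightarrow> 'x) \<Rightarrow> ('x list \<Rightarrow> real)
    \<Rightarrow> ('t \<Rightarrow> 'x list \<Rightarrow> real) \<Rightarrow> 't measure \<Rightarrow> 't set \<Rightarrow> real" where
  "Jset M X p f pr A = ess_inf_on pr A (Jfun M X p f pr)"

text \<open>Decision configurations d in {0,1}^m are represented by the set of rejected indices, d \<subseteq> {1..m}.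
  Theta_{d_j j}.\<close>
definition sel_set :: "(nat \<Rightarrow> 'a set) \<Rightarrow> (nat \<Rightarrow> 'a set) \<Rightarrow> nat set \<Rightarrow> nat \<Rightarrow> 'a set" where
  "sel_set \<Theta>0 \<Theta>1 d j = (if j \<in> d then \<Theta>1 j else \<Theta>0 j)"

definition config_set :: "(nat \<Rightarrow> 'a) measure \<Rightarrow> (nat \<Rightarrow> 'a set) \<Rightarrow> (nat \<Rightarrow> 'a set) \<Rightarrow> nat
    \<Rightarrow> nat set \<Rightarrow> (nat \<Rightarrow> 'a) set" where
  "config_set pr \<Theta>0 \<Theta>1 m d = {\<theta> \<in> space pr. \<forall>j\<in>{1..m}. \<theta> j \<in> sel_set \<Theta>0 \<Theta>1 d j}"

definition Psi :: "(nat \<Rightarrow> 'a) measure \<Rightarrow> (nat \<Rightarrow> 'a set) \<Rightarrow> (nat \<Rightarrow> 'a set) \<Rightarrow> (nat \<Rightarrow> nat set)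
    \<Rightarrow> nat \<Rightarrow> nat set \<Rightarrow> (nat \<Rightarrow> 'a) set" where
  "Psi pr \<Theta>0 \<Theta>1 G i d =
     {\<theta> \<in> space pr. \<theta> i \<in> \<Theta>1 i \<and> (\<forall>j \<in> G i - {i}. \<theta> j \<in> sel_set \<Theta>0 \<Theta>1 d j)}"

definition Ups :: "(nat \<Rightarrow> 'a) measure \<Rightarrow> (nat \<Rightarrow> 'a set) \<Rightarrow> nat \<Rightarrow> (nat \<Rightarrow> 'a) set" where
  "Ups pr \<Theta>k i = {\<theta> \<in> space pr. \<theta> i \<in> \<Theta>k i}"

definition NM_score :: "(nat \<Rightarrow> nat set \<Rightarrow> real) \<Rightarrow> real \<Rightarrow> nat set \<Rightarrow> real" where
  "NM_score w b d = (\<Sum>i\<in>d. (w i d - b))"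

text \<open>delta_NM(d | X_n): the selected configuration is the maximiser picked by the
  fixed tie-breaking rule tiebreak (a function of the score function).\<close>
definition delta_NM :: "(nat \<Rightarrow> 'w \<Rightarrow> 'x) \<Rightarrow> (nat \<Rightarrow> 'a) measure \<Rightarrow> ((nat \<Rightarrow> 'a) \<Rightarrow> 'x list \<Rightarrow> real)
    \<Rightarrow> (nat \<Rightarrow> 'a set) \<Rightarrow> (nat \<Rightarrow> 'a set) \<Rightarrow> (nat \<Rightarrow> nat set) \<Rightarrow> (nat \<Rightarrow> real)
    \<Rightarrow> ((nat set \<Rightarrow> real) \<Rightarrow> nat set) \<Rightarrow> nat \<Rightarrow> 'w \<Rightarrow> nat set \<Rightarrow> real" where
  "delta_NM X pr f \<Theta>0 \<Theta>1 G \<beta> tiebreak n \<omega> d =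
     (if tiebreak (NM_score (\<lambda>i d'. post X pr f n \<omega> (Psi pr \<Theta>0 \<Theta>1 G i d')) (\<beta> n)) = d
      then 1 else 0)"

end

theory Submission
  imports Defs
begin

text \<open>Almost surely, the posterior probability of every set \<open>A\<close> with \<open>J(A) > 0\<close> decays
  exponentially. Hence \<open>w\<^sub>i\<^sub>n(d) \<rightarrow> 0\<close> whenever \<open>i \<notin> d\<^sup>t\<close> or \<open>d\<close> disagrees with \<open>d\<^sup>t\<close>
  on \<open>G\<^sub>i\<close>, while for \<open>i \<in> d\<^sup>t\<close> the complement of \<open>\<Psi>\<^sub>i\<^sub>d\<^sub>t\<close> has positive \<open>J\<close>, so
  \<open>w\<^sub>i\<^sub>n(d\<^sup>t) \<rightarrow> 1\<close>. Once \<open>\<beta>\<^sub>n\<close> stays in a compact subinterval of \<open>(0,1)\<close>, a termwise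
  comparison shows that the score of \<open>d\<^sup>t\<close> strictly exceeds that of every other \<open>d\<close>, so the
  tie-breaking rule selects \<open>d\<^sup>t\<close>.\<close>

lemma eventually_less_if_log_rate_negative:
  fixes a :: "nat \<Rightarrow> real"
  assumes rate: "(\<lambda>n. ln (a n) / real n) \<longlonglongrightarrow> - J" and "0 < J" "0 < \<epsilon>"
  shows "eventually (\<lambda>n. a n < \<epsilon>) sequentially"
proof -
  have "eventually (\<lambda>n. ln (a n) / real n < - J / 2) sequentially"
    using order_tendstoD(2)[OF rate, of "- J / 2"] \<open>0 < J\<close> by simp
  moreover have "filterlim (\<lambda>n. J / 2 * real n) at_top sequentially"
    using \<open>0 < J\<close>
    by (intro filterlim_tendsto_pos_mult_at_top[OF tendsto_const _ filterlim_real_sequentially]) simp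
  then have "eventually (\<lambda>n. - ln \<epsilon> < J / 2 * real n) sequentially"
    unfolding filterlim_at_top_dense by (rule spec)
  ultimately show ?thesis
    using eventually_gt_at_top[of 0]
  proof eventually_elim
    case (elim n)
    then have "ln (a n) < ln \<epsilon>"
      by (simp add: field_simps)
    then show ?case
      using \<open>0 < \<epsilon>\<close> by (cases "0 < a n") auto
  qed
qed

lemma tendsto_zero_if_log_rate_negative:
  fixes a :: "nat \<Rightarrow> real"
  assumes "\<And>n. 0 \<le> a n" "(\<lambda>n. ln (a n) / real n) \<longlonglongrightarrow> - J" "0 < J"
  shows "a \<longlonglongrightarrow> 0"
proof (rule order_tendstoI)
  show "eventually (\<lambda>n. y < a n) sequentially" if "y < 0" for y
    using assms(1) that by (intro always_eventually allI) (meson less_le_trans)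
  show "eventually (\<lambda>n. a n < y) sequentially" if "0 < y" for y
    using eventually_less_if_log_rate_negative[OF assms(2,3) that] .
qed

lemma post_prob_nonneg:
  assumes "\<And>t. 0 \<le> f t y"
  shows "0 \<le> post_prob pr f y A"
  unfolding post_prob_def set_lebesgue_integral_def
  using assms by (intro divide_nonneg_nonneg integral_nonneg_AE) auto

lemma post_prob_Diff_space:
  assumes "A \<in> sets pr" "integrable pr (\<lambda>t. f t y)" "0 < (LINT t|pr. f t y)"
  shows "post_prob pr f y (space pr - A) = 1 - post_prob pr f y A"
proof -
  have "(LINT t:space pr - A|pr. f t y) = (LINT t|pr. f t y - indicator A t *\<^sub>R f t y)"
    unfolding set_lebesgue_integral_def
    by (intro Bochner_Integration.integral_cong) (auto simp: indicator_def)
  also have "\<dots> = (LINT t|pr. f t y) - (LINT t:A|pr. f t y)"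
    unfolding set_lebesgue_integral_def
    using assms by (intro Bochner_Integration.integral_diff integrable_mult_indicator)
  finally show ?thesis
    using assms(3) unfolding post_prob_def by (simp add: diff_divide_distrib)
qed

lemma AE_post_tendsto_0:
  assumes "\<forall>\<theta> x. 0 \<le> f \<theta> x"
    and "AE \<omega> in M. (\<lambda>n. ln (post X pr f n \<omega> A) / real n) \<longlonglongrightarrow> - J" "0 < J"
  shows "AE \<omega> in M. (\<lambda>n. post X pr f n \<omega> A) \<longlonglongrightarrow> 0"
  using assms(2)
proof eventually_elim
  case (elim \<omega>)
  show ?case
  proof (rule tendsto_zero_if_log_rate_negative[OF _ elim \<open>0 < J\<close>])
    show "0 \<le> post X pr f n \<omega> A" for n
      unfolding post_def using assms(1) by (intro post_prob_nonneg) simp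
  qed
qed

lemma AE_post_tendsto_1:
  assumes "\<forall>\<theta> x. 0 \<le> f \<theta> x"
    and "\<forall>n. \<forall>\<omega>\<in>space M. integrable pr (\<lambda>\<theta>. f \<theta> (data X n \<omega>))"
    and "\<forall>n. \<forall>\<omega>\<in>space M. 0 < (LINT \<theta>|pr. f \<theta> (data X n \<omega>))"
    and "A \<in> sets pr"
    and "AE \<omega> in M. (\<lambda>n. ln (post X pr f n \<omega> (space pr - A)) / real n) \<longlonglongrightarrow> - J" "0 < J"
  shows "AE \<omega> in M. (\<lambda>n. post X pr f n \<omega> A) \<longlonglongrightarrow> 1"
  using AE_post_tendsto_0[OF assms(1,5,6)] AE_space
proof eventually_elim
  case (elim \<omega>)
  have "post X pr f n \<omega> A = 1 - post X pr f n \<omega> (space pr - A)" for n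
    unfolding post_def using assms(2-4) elim(2) by (simp add: post_prob_Diff_space)
  then show ?case
    using tendsto_diff[OF tendsto_const elim(1), of 1] by simp
qed

lemma Psi_cong_group:
  assumes "d \<inter> G i = d' \<inter> G i"
  shows "Psi pr \<Theta>0 \<Theta>1 G i d = Psi pr \<Theta>0 \<Theta>1 G i d'"
proof -
  have "\<forall>j\<in>G i. (j \<in> d) = (j \<in> d')"
    using assms by blast
  then show ?thesis
    unfolding Psi_def sel_set_def by auto
qed

lemma NM_score_less_true_config:
  fixes W :: "nat \<Rightarrow> nat set \<Rightarrow> real"
  assumes fin: "finite d" "finite dt" and "d \<noteq> dt"
    and b: "\<epsilon> < b" "b < 1 - \<epsilon>"
    and low: "\<And>i. i \<in> d \<Longrightarrow> i \<notin> dt \<or> d \<inter> G i \<noteq> dt \<inter> G i \<Longrightarrow> W i d < \<epsilon>"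
    and high: "\<And>i. i \<in> dt \<Longrightarrow> 1 - \<epsilon> < W i dt"
    and same: "\<And>i. d \<inter> G i = dt \<inter> G i \<Longrightarrow> W i d = W i dt"
  shows "NM_score W b d < NM_score W b dt"
proof -
  define u where "u i = (if i \<in> d then W i d - b else 0)" for i
  define v where "v i = (if i \<in> dt then W i dt - b else 0)" for i
  have "NM_score W b d = sum u (d \<union> dt)" and "NM_score W b dt = sum v (d \<union> dt)"
    unfolding NM_score_def u_def v_def using fin
    by (simp_all add: sum.inter_restrict[symmetric] Int_absorb1)
  moreover have "u i < v i" if "i \<in> d \<union> dt" "i \<notin> d \<inter> dt" for i
  proof (cases "i \<in> d")
    case True
    then show ?thesis
      using that low[of i] b unfolding u_def v_def by auto
  next
    case False
    then show ?thesis
      using that high[of i] b unfolding u_def v_def by auto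
  qed
  moreover have "u i \<le> v i" if "i \<in> d \<inter> dt" for i
    using that low[of i] high[of i] same[of i] b unfolding u_def v_def by fastforce
  moreover obtain i where "i \<in> d \<union> dt" "i \<notin> d \<inter> dt"
    using \<open>d \<noteq> dt\<close> by blast
  ultimately show ?thesis
    using fin by (metis finite_UnI less_imp_le sum_strict_mono_ex1)
qed

lemma eventually_bounded_away_from_0_1:
  fixes b :: "nat \<Rightarrow> real"
  assumes "0 < liminf (\<lambda>n. ereal (b n))" "limsup (\<lambda>n. ereal (b n)) < 1"
  obtains \<epsilon> where "0 < \<epsilon>" "eventually (\<lambda>n. \<epsilon> < b n \<and> b n < 1 - \<epsilon>) sequentially"
proof -
  obtain l where l: "0 < l" "ereal l < liminf (\<lambda>n. ereal (b n))"
    using ereal_dense2[OF assms(1)] by force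
  obtain h where h: "limsup (\<lambda>n. ereal (b n)) < ereal h" "h < 1"
    using ereal_dense2[OF assms(2)] by force
  have "eventually (\<lambda>n. l < b n \<and> b n < h) sequentially"
    using less_LiminfD[OF l(2)] Limsup_lessD[OF h(1)] by eventually_elim simp
  then have "eventually (\<lambda>n. min l (1 - h) < b n \<and> b n < 1 - min l (1 - h)) sequentially"
    by eventually_elim linarith
  moreover have "0 < min l (1 - h)"
    using l(1) h(2) by simp
  ultimately show ?thesis
    using that by blast
qed

lemma eventually_tiebreak_NM_score_eq_true_config:
  fixes W :: "nat \<Rightarrow> nat \<Rightarrow> nat set \<Rightarrow> real" and b :: "nat \<Rightarrow> real"
  assumes dt: "dt \<subseteq> {1..m}"
    and low: "\<forall>i\<in>{1..m}. \<forall>d\<in>Pow {1..m}. i \<notin> dt \<or> d \<inter> G i \<noteq> dt \<inter> G i \<longrightarrow>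
        (\<lambda>n. W n i d) \<longlonglongrightarrow> 0"
    and high: "\<forall>i\<in>dt. (\<lambda>n. W n i dt) \<longlonglongrightarrow> 1"
    and same: "\<And>n i d. d \<inter> G i = dt \<inter> G i \<Longrightarrow> W n i d = W n i dt"
    and b: "0 < liminf (\<lambda>n. ereal (b n))" "limsup (\<lambda>n. ereal (b n)) < 1"
    and tiebreak: "\<forall>g. tiebreak g \<subseteq> {1..m} \<and> (\<forall>d. d \<subseteq> {1..m} \<longrightarrow> g d \<le> g (tiebreak g))"
  shows "eventually (\<lambda>n. tiebreak (NM_score (W n) (b n)) = dt) sequentially"
proof -
  obtain \<epsilon> where "0 < \<epsilon>" and b_ev: "eventually (\<lambda>n. \<epsilon> < b n \<and> b n < 1 - \<epsilon>) sequentially"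
    using eventually_bounded_away_from_0_1[OF b] .
  have low_ev: "eventually (\<lambda>n. \<forall>i\<in>{1..m}. \<forall>d\<in>Pow {1..m}.
      i \<notin> dt \<or> d \<inter> G i \<noteq> dt \<inter> G i \<longrightarrow> W n i d < \<epsilon>) sequentially"
  proof (intro eventually_ball_finite ballI)
    fix i d assume "i \<in> {1..m}" "d \<in> Pow {1..m}"
    show "eventually (\<lambda>n. i \<notin> dt \<or> d \<inter> G i \<noteq> dt \<inter> G i \<longrightarrow> W n i d < \<epsilon>) sequentially"
    proof (cases "i \<notin> dt \<or> d \<inter> G i \<noteq> dt \<inter> G i")
      case True
      with low \<open>i \<in> {1..m}\<close> \<open>d \<in> Pow {1..m}\<close> have "(\<lambda>n. W n i d) \<longlonglongrightarrow> 0"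
        by blast
      from order_tendstoD(2)[OF this \<open>0 < \<epsilon>\<close>] show ?thesis
        by eventually_elim simp
    qed simp
  qed simp_all
  have high_ev: "eventually (\<lambda>n. \<forall>i\<in>dt. 1 - \<epsilon> < W n i dt) sequentially"
  proof (intro eventually_ball_finite ballI)
    show "finite dt"
      using dt finite_subset by blast
    fix i assume "i \<in> dt"
    with high have "(\<lambda>n. W n i dt) \<longlonglongrightarrow> 1"
      by blast
    from order_tendstoD(1)[OF this] show "eventually (\<lambda>n. 1 - \<epsilon> < W n i dt) sequentially"
      using \<open>0 < \<epsilon>\<close> by simp
  qed
  show ?thesis
    using b_ev low_ev high_ev
  proof eventually_elim
    case (elim n)
    let ?g = "NM_score (W n) (b n)"
    have "?g d < ?g dt" if d: "d \<subseteq> {1..m}" "d \<noteq> dt" for d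
    proof (rule NM_score_less_true_config[where \<epsilon> = \<epsilon> and G = G])
      show "finite d" "finite dt"
        using d(1) dt finite_subset by blast+
      show "\<epsilon> < b n" "b n < 1 - \<epsilon>"
        using elim(1) by simp_all
      show "W n i d < \<epsilon>" if "i \<in> d" "i \<notin> dt \<or> d \<inter> G i \<noteq> dt \<inter> G i" for i
      proof -
        have "i \<in> {1..m}" "d \<in> Pow {1..m}"
          using that(1) d(1) by auto
        with elim(2) that(2) show ?thesis
          by blast
      qed
      show "1 - \<epsilon> < W n i dt" if "i \<in> dt" for i
        using elim(3) that by blast
      show "W n i d = W n i dt" if "d \<inter> G i = dt \<inter> G i" for i
        using same[OF that] .
    qed (rule d(2))
    moreover have "tiebreak ?g \<subseteq> {1..m}" "?g dt \<le> ?g (tiebreak ?g)"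
      using tiebreak dt by blast+
    ultimately show ?case
      by (meson not_le)
  qed
qed

lemma (in prob_space) tendsto_expectation_bounded:
  fixes g :: "nat \<Rightarrow> 'a \<Rightarrow> real"
  assumes "\<And>n. g n \<in> borel_measurable M" "\<And>n x. \<bar>g n x\<bar> \<le> B"
    and "AE x in M. (\<lambda>n. g n x) \<longlonglongrightarrow> c"
  shows "(\<lambda>n. expectation (g n)) \<longlonglongrightarrow> c"
proof -
  have "(\<lambda>n. expectation (g n)) \<longlonglongrightarrow> expectation (\<lambda>_. c)"
    using assms by (intro integral_dominated_convergence[where w = "\<lambda>_. B"]) auto
  then show ?thesis
    by (simp add: prob_space)
qed

theorem theorem2:
  fixes M :: "'w measure" and X :: "nat \<Rightarrow> 'w \<Rightarrow> 'x"
    and p :: "'x list \<Rightarrow> real" and f :: "(nat \<Rightarrow> 'a) \<Rightarrow> 'x list \<Rightarrow> real"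
    and prior :: "(nat \<Rightarrow> 'a) measure"
    and \<Theta>0 \<Theta>1 :: "nat \<Rightarrow> 'a set" and m :: nat
    and G :: "nat \<Rightarrow> nat set" and dt :: "nat set"
    and \<beta> :: "nat \<Rightarrow> real"
    and tiebreak :: "(nat set \<Rightarrow> real) \<Rightarrow> nat set"
  assumes P: "prob_space M"
    and prior: "prob_space prior"
    and f_nonneg: "\<forall>\<theta> x. 0 \<le> f \<theta> x"
    and f_int: "\<forall>n. \<forall>\<omega>\<in>space M. integrable prior (\<lambda>\<theta>. f \<theta> (data X n \<omega>))"
    and f_pos: "\<forall>n. \<forall>\<omega>\<in>space M. 0 < (LINT \<theta>|prior. f \<theta> (data X n \<omega>))"
    and m: "1 < m"
    and disj: "\<forall>i\<in>{1..m}. \<Theta>0 i \<inter> \<Theta>1 i = {}"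
    and cover: "\<forall>\<theta>\<in>space prior. \<forall>i\<in>{1..m}. \<theta> i \<in> \<Theta>0 i \<union> \<Theta>1 i"
    and groups: "\<forall>i\<in>{1..m}. i \<in> G i \<and> G i \<subseteq> {1..m}"
    and dt_sub: "dt \<subseteq> {1..m}"
    and dt_true: "\<forall>d. d \<subseteq> {1..m} \<longrightarrow>
        (Jset M X p f prior (config_set prior \<Theta>0 \<Theta>1 m d) = Jset M X p f prior (space prior)
         \<longleftrightarrow> d = dt)"
    and conc: "\<forall>i\<in>{1..m}. \<forall>d. d \<subseteq> {1..m} \<longrightarrow>
        (\<forall>A \<in> {Psi prior \<Theta>0 \<Theta>1 G i d, space prior - Psi prior \<Theta>0 \<Theta>1 G i d,
                Ups prior \<Theta>0 i, Ups prior \<Theta>1 i}.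
           A \<in> sets prior \<and> 0 < measure prior A \<and>
           (AE \<omega> in M. (\<lambda>n. ln (post X prior f n \<omega> A) / real n)
                          \<longlonglongrightarrow> - Jset M X p f prior A))"
    and pos_notD: "\<forall>i\<in>{1..m}. \<forall>d. d \<subseteq> {1..m} \<and> \<not> (\<forall>j\<in>G i. (j \<in> d) = (j \<in> dt)) \<longrightarrow>
        0 < Jset M X p f prior (Psi prior \<Theta>0 \<Theta>1 G i d)"
    and pos_dt0: "\<forall>i\<in>{1..m}. i \<notin> dt \<longrightarrow> 0 < Jset M X p f prior (Psi prior \<Theta>0 \<Theta>1 G i dt)"
    and pos_dt1: "\<forall>i\<in>{1..m}. i \<in> dt \<longrightarrow>
        0 < Jset M X p f prior (space prior - Psi prior \<Theta>0 \<Theta>1 G i dt)"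
    and pos_H1: "\<forall>i\<in>{1..m}. i \<notin> dt \<longrightarrow> 0 < Jset M X p f prior (Ups prior \<Theta>1 i)"
    and pos_H0: "\<forall>i\<in>{1..m}. i \<in> dt \<longrightarrow> 0 < Jset M X p f prior (Ups prior \<Theta>0 i)"
    and beta_range: "\<forall>n. 0 \<le> \<beta> n \<and> \<beta> n < 1"
    and A1: "0 < liminf (\<lambda>n. ereal (\<beta> n))" "limsup (\<lambda>n. ereal (\<beta> n)) < 1"
    and tiebreak: "\<forall>g. tiebreak g \<subseteq> {1..m} \<and> (\<forall>d. d \<subseteq> {1..m} \<longrightarrow> g d \<le> g (tiebreak g))"
    and delta_meas: "\<forall>n. (\<lambda>\<omega>. delta_NM X prior f \<Theta>0 \<Theta>1 G \<beta> tiebreak n \<omega> dt) \<in> borel_measurable M"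
  shows "(AE \<omega> in M. eventually (\<lambda>n. delta_NM X prior f \<Theta>0 \<Theta>1 G \<beta> tiebreak n \<omega> dt = 1) sequentially)
    \<and> (AE \<omega> in M. (\<lambda>n. delta_NM X prior f \<Theta>0 \<Theta>1 G \<beta> tiebreak n \<omega> dt) \<longlonglongrightarrow> 1)
    \<and> (\<lambda>n. LINT \<omega>|M. delta_NM X prior f \<Theta>0 \<Theta>1 G \<beta> tiebreak n \<omega> dt) \<longlonglongrightarrow> 1"
proof -
  let ?J = "Jset M X p f prior"
  let ?Psi = "Psi prior \<Theta>0 \<Theta>1 G"
  let ?w = "\<lambda>\<omega> n i d. post X prior f n \<omega> (?Psi i d)"
  let ?\<delta> = "\<lambda>n \<omega>. delta_NM X prior f \<Theta>0 \<Theta>1 G \<beta> tiebreak n \<omega> dt"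
  have low: "AE \<omega> in M. \<forall>i\<in>{1..m}. \<forall>d\<in>Pow {1..m}. i \<notin> dt \<or> d \<inter> G i \<noteq> dt \<inter> G i \<longrightarrow>
      (\<lambda>n. ?w \<omega> n i d) \<longlonglongrightarrow> 0"
  proof (intro eventually_ball_finite ballI)
    fix i d assume i: "i \<in> {1..m}" and d: "d \<in> Pow {1..m}"
    have pos: "0 < ?J (?Psi i d)" if "i \<notin> dt \<or> d \<inter> G i \<noteq> dt \<inter> G i"
    proof (cases "d \<inter> G i = dt \<inter> G i")
      case True
      then show ?thesis
        using that pos_dt0 i Psi_cong_group[of d G i dt prior \<Theta>0 \<Theta>1] by simp
    qed (use pos_notD i d in blast)
    have rate: "AE \<omega> in M. (\<lambda>n. ln (?w \<omega> n i d) / real n) \<longlonglongrightarrow> - ?J (?Psi i d)"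
      using conc i d by blast
    show "AE \<omega> in M. i \<notin> dt \<or> d \<inter> G i \<noteq> dt \<inter> G i \<longrightarrow> (\<lambda>n. ?w \<omega> n i d) \<longlonglongrightarrow> 0"
    proof (cases "i \<notin> dt \<or> d \<inter> G i \<noteq> dt \<inter> G i")
      case True
      from AE_post_tendsto_0[OF f_nonneg rate pos[OF True]] show ?thesis
        by eventually_elim simp
    qed simp
  qed simp_all
  have high: "AE \<omega> in M. \<forall>i\<in>dt. (\<lambda>n. ?w \<omega> n i dt) \<longlonglongrightarrow> 1"
  proof (intro eventually_ball_finite ballI)
    show "finite dt"
      using dt_sub finite_subset by blast
    fix i assume "i \<in> dt"
    with dt_sub have "i \<in> {1..m}"
      by blast
    with conc pos_dt1 dt_sub \<open>i \<in> dt\<close> show "AE \<omega> in M. (\<lambda>n. ?w \<omega> n i dt) \<longlonglongrightarrow> 1"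
      by (intro AE_post_tendsto_1[OF f_nonneg f_int f_pos]) auto
  qed
  have eventually_true: "AE \<omega> in M. eventually (\<lambda>n. ?\<delta> n \<omega> = 1) sequentially"
    using low high
  proof eventually_elim
    case (elim \<omega>)
    have "eventually (\<lambda>n. tiebreak (NM_score (?w \<omega> n) (\<beta> n)) = dt) sequentially"
      using dt_sub elim A1 tiebreak
    proof (intro eventually_tiebreak_NM_score_eq_true_config[where G = G])
      show "?w \<omega> n i d = ?w \<omega> n i dt" if "d \<inter> G i = dt \<inter> G i" for n i d
        using Psi_cong_group[of d G i dt prior \<Theta>0 \<Theta>1, OF that] by simp
    qed auto
    then show ?case
      unfolding delta_NM_def by eventually_elim simp
  qed
  moreover have tendsto_true: "AE \<omega> in M. (\<lambda>n. ?\<delta> n \<omega>) \<longlonglongrightarrow> 1"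
    using eventually_true by eventually_elim (rule tendsto_eventually)
  moreover have "(\<lambda>n. LINT \<omega>|M. ?\<delta> n \<omega>) \<longlonglongrightarrow> 1"
    using delta_meas tendsto_true
    by (intro prob_space.tendsto_expectation_bounded[OF P, where B = 1]) (auto simp: delta_NM_def)
  ultimately show ?thesis
    by blast
qed

end
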